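(* Let $\mathbf{B}$ be the interaction matrix of an antiferromagnetic $q$-spin system, and let $\mathbf{z}_1,\mathbf{z}_2\in\mathbb{R}^q_{\geq0}$ with $\|\mathbf{z}_1\|_1=\|\mathbf{z}_2\|_1=1$. Then \[(\mathbf{z}_1^{\intercal}\mathbf{B}\mathbf{z}_1)(\mathbf{z}_2^{\intercal}\mathbf{B}\mathbf{z}_2)\leq(\mathbf{z}_1^{\intercal}\mathbf{B}\mathbf{z}_2)^2,\] with equality if and only if $\mathbf{z}_1=\mathbf{z}_2$.
   Context: $\mathbf{B}$ is a symmetric irreducible $q\times q$ matrix with nonnegative entries. It is antiferromagnetic if, apart from its Perron–Frobenius eigenvalue (which is positive and simple), all its eigenvalues are negative; in particular $\mathbf{B}$ is invertible. *)

theory Defs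
  imports "HOL-Analysis.Analysis"
begin

definition sym_matrix :: "real^'n^'n \<Rightarrow> bool" where
  "sym_matrix B \<longleftrightarrow> transpose B = B"

definition nonneg_matrix :: "real^'n^'n \<Rightarrow> bool" where
  "nonneg_matrix B \<longleftrightarrow> (\<forall>i j. B$i$j \<ge> 0)"

definition irreducible_matrix :: "real^'n^'n \<Rightarrow> bool" where
  "irreducible_matrix B \<longleftrightarrow>
     (\<forall>S. S \<noteq> {} \<and> S \<noteq> UNIV \<longrightarrow> (\<exists>i\<in>S. \<exists>j. j \<notin> S \<and> B$i$j \<noteq> 0))"

definition is_eigenvalue :: "real^'n^'n \<Rightarrow> real \<Rightarrow> bool" where
  "is_eigenvalue B \<mu> \<longleftrightarrow> (\<exists>v. v \<noteq> 0 \<and> B *v v = \<mu> *\<^sub>R v)"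

definition eigsp :: "real^'n^'n \<Rightarrow> real \<Rightarrow> (real^'n) set" where
  "eigsp B \<mu> = {v. B *v v = \<mu> *\<^sub>R v}"

text \<open>Antiferromagnetic interaction matrix: symmetric, irreducible, nonnegative; its
 Perron--Frobenius eigenvalue is positive and simple and all other eigenvalues are negative.
 (For a real symmetric matrix all eigenvalues are real and geometric = algebraic multiplicity;
 the unique positive eigenvalue is necessarily the Perron--Frobenius eigenvalue.)\<close>
definition antiferromagnetic :: "real^'n^'n \<Rightarrow> bool" where
  "antiferromagnetic B \<longleftrightarrow> sym_matrix B \<and> nonneg_matrix B \<and> irreducible_matrix B \<and>
     (\<exists>r. r > 0 \<and> is_eigenvalue B r \<and> dim (eigsp B r) = 1 \<and>
        (\<forall>\<mu>. is_eigenvalue B \<mu> \<and> \<mu> \<noteq> r \<longrightarrow> \<mu> < 0))"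

end

theory Submission
  imports Defs
begin

text \<open>Let \<open>v\<close> be a Perron eigenvector of \<open>B\<close>. The maximum of \<open>x \<bullet> (B *v x)\<close> on the unit sphere
  of the hyperplane \<open>v\<^sup>\<bottom>\<close> is an eigenvalue of \<open>B\<close> different from the Perron eigenvalue, hence
  negative, so the quadratic form of \<open>B\<close> is negative definite on \<open>v\<^sup>\<bottom>\<close>. The vector
  \<open>w = (z2 \<bullet> v) z1 - (z1 \<bullet> v) z2\<close> lies in \<open>v\<^sup>\<bottom>\<close> and is nonzero unless \<open>z1 = z2\<close>. Its quadratic
  form is a binary quadratic form with coefficients \<open>z1 \<bullet> (B *v z1)\<close>, \<open>z1 \<bullet> (B *v z2)\<close>,
  \<open>z2 \<bullet> (B *v z2)\<close>; since the diagonal ones are nonnegative, negativity of this form at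
  one point forces a positive discriminant, which is the claimed strict inequality.\<close>

lemma inner_matrix_vector_symmetric:
  fixes B :: "real^'n^'n"
  assumes "transpose B = B"
  shows "y \<bullet> (B *v x) = (B *v y) \<bullet> x"
proof -
  have "y \<bullet> (B *v x) = (y v* B) \<bullet> x" by (rule dot_lmul_matrix[symmetric])
  also have "y v* B = B *v y" using assms transpose_matrix_vector[of B y] by simp
  finally show ?thesis .
qed

lemma quadratic_form_scaleR:
  fixes B :: "real^'n^'n"
  shows "(c *\<^sub>R x) \<bullet> (B *v (c *\<^sub>R x)) = c\<^sup>2 * (x \<bullet> (B *v x))"
  by (simp add: matrix_vector_mult_scaleR power2_eq_square)

lemma quadratic_form_diff_scaleR:
  fixes B :: "real^'n^'n"
  assumes "transpose B = B"
  shows "(s *\<^sub>R x - t *\<^sub>R y) \<bullet> (B *v (s *\<^sub>R x - t *\<^sub>R y))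
           = s\<^sup>2 * (x \<bullet> (B *v x)) - 2 * s * t * (x \<bullet> (B *v y)) + t\<^sup>2 * (y \<bullet> (B *v y))"
proof -
  have "y \<bullet> (B *v x) = x \<bullet> (B *v y)"
    using inner_matrix_vector_symmetric[OF assms, of y x] by (simp add: inner_commute)
  then show ?thesis
    by (simp add: matrix_vector_mult_diff_distrib matrix_vector_mult_scaleR inner_diff_left
        inner_diff_right power2_eq_square algebra_simps)
qed

lemma quadratic_nonpos_imp_linear_coeff_zero:
  fixes g h :: real
  assumes "\<forall>s. 2 * s * g + s\<^sup>2 * h \<le> 0"
  shows "g = 0"
proof -
  define e where "e = 1 / (1 + \<bar>h\<bar>)"
  have e: "e > 0" "e * \<bar>h\<bar> < 1" unfolding e_def by (auto simp: field_simps)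
  have "2 * (e * g) * g + (e * g)\<^sup>2 * h \<le> 0" using assms by blast
  then have "g\<^sup>2 * (e * (2 + e * h)) \<le> 0" by (simp add: algebra_simps power2_eq_square)
  moreover have "e * h > -1" using e by (smt (verit) mult_minus_right abs_ge_minus_self mult_left_mono)
  then have "e * (2 + e * h) > 0" using e by (smt (verit) mult_pos_pos)
  ultimately have "g\<^sup>2 \<le> 0" by (smt (verit) mult_pos_pos zero_less_power2 mult_le_0_iff)
  then show ?thesis by simp
qed

text \<open>Variational characterisation: the maximiser on the unit sphere of \<open>v\<^sup>\<bottom>\<close> is an eigenvector,
  because the first variation of the Rayleigh quotient in the direction \<open>B x0 - m x0\<close>, which
  stays in \<open>v\<^sup>\<bottom>\<close> as \<open>v\<close> is an eigenvector, must vanish.\<close>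

lemma rayleigh_max_on_orthogonal_complement:
  fixes B :: "real^'n^'n"
  assumes sym: "transpose B = B" and v: "B *v v = r *\<^sub>R v"
    and x: "x \<bullet> v = 0" "x \<noteq> 0"
  obtains x0 m where "x0 \<noteq> 0" "x0 \<bullet> v = 0" "B *v x0 = m *\<^sub>R x0"
    and "\<And>z. z \<bullet> v = 0 \<Longrightarrow> z \<bullet> (B *v z) \<le> m * (z \<bullet> z)"
proof -
  define Q where "Q = (\<lambda>y. y \<bullet> (B *v y))"
  define S where "S = sphere (0::real^'n) 1 \<inter> {y. v \<bullet> y = 0}"
  have "compact S" unfolding S_def
    by (intro compact_Int_closed compact_sphere closed_hyperplane)
  moreover have "(1 / norm x) *\<^sub>R x \<in> S" using x by (simp add: S_def inner_commute)
  then have "S \<noteq> {}" by blast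
  moreover have "continuous_on S Q" unfolding Q_def
    by (intro continuous_on_inner continuous_on_id matrix_vector_mult_linear_continuous_on)
  ultimately obtain x0 where x0: "x0 \<in> S" and max: "\<forall>y\<in>S. Q y \<le> Q x0"
    using continuous_attains_sup by blast
  define m where "m = Q x0"
  have x0v: "x0 \<bullet> v = 0" and x0x0: "x0 \<bullet> x0 = 1"
    using x0 by (auto simp: S_def inner_commute power2_norm_eq_inner[symmetric])
  have bound: "Q z \<le> m * (z \<bullet> z)" if "z \<bullet> v = 0" for z
  proof (cases "z = 0")
    case False
    have "(1 / norm z) *\<^sub>R z \<in> S" using that False by (simp add: S_def inner_commute)
    then have "Q ((1 / norm z) *\<^sub>R z) \<le> m" using max unfolding m_def by blast
    then have "(1 / norm z)\<^sup>2 * Q z \<le> m" unfolding Q_def quadratic_form_scaleR .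
    then show ?thesis using False by (simp add: field_simps power2_eq_square flip: power2_norm_eq_inner)
  qed (simp add: Q_def)
  define w where "w = B *v x0 - m *\<^sub>R x0"
  have wv: "w \<bullet> v = 0"
    using inner_matrix_vector_symmetric[OF sym, of x0 v] v x0v by (simp add: w_def inner_diff_left)
  have "\<forall>s. 2 * s * (w \<bullet> w) + s\<^sup>2 * (Q w - m * (w \<bullet> w)) \<le> 0"
  proof
    fix s :: real
    have "Q (x0 + s *\<^sub>R w) \<le> m * ((x0 + s *\<^sub>R w) \<bullet> (x0 + s *\<^sub>R w))"
      using x0v wv by (intro bound) (simp add: inner_add_left)
    moreover have "x0 \<bullet> (B *v w) = (B *v x0) \<bullet> w" using inner_matrix_vector_symmetric[OF sym] .
    ultimately show "2 * s * (w \<bullet> w) + s\<^sup>2 * (Q w - m * (w \<bullet> w)) \<le> 0"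
      using x0x0 unfolding Q_def m_def w_def
      by (simp add: matrix_vector_right_distrib matrix_vector_mult_scaleR inner_add_left
          inner_add_right inner_diff_left inner_diff_right power2_eq_square algebra_simps inner_commute)
  qed
  then have "w \<bullet> w = 0" by (rule quadratic_nonpos_imp_linear_coeff_zero)
  then have "w = 0" by simp
  then have "B *v x0 = m *\<^sub>R x0" by (simp add: w_def)
  moreover have "x0 \<noteq> 0" using x0x0 by auto
  ultimately show ?thesis using that x0v bound unfolding Q_def by blast
qed

lemma eigsp_eq_span_if_dim_one:
  fixes B :: "real^'n^'n"
  assumes "dim (eigsp B r) = 1" "v \<noteq> 0" "B *v v = r *\<^sub>R v"
  shows "eigsp B r = span {v}"
proof -
  have "subspace (eigsp B r)" unfolding subspace_def eigsp_def
    by (auto simp: matrix_vector_right_distrib matrix_vector_mult_scaleR algebra_simps)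
  moreover have "{v} \<subseteq> eigsp B r" using assms by (simp add: eigsp_def)
  moreover have "dim (eigsp B r) \<le> dim {v}" using assms by (simp add: dim_singleton)
  ultimately show ?thesis by (metis dim_eq_span span_eq_iff)
qed

lemma antiferromagnetic_negative_on_orthogonal_complement:
  fixes B :: "real^'n^'n"
  assumes "antiferromagnetic B"
  obtains v where "\<And>x. x \<bullet> v = 0 \<Longrightarrow> x \<noteq> 0 \<Longrightarrow> x \<bullet> (B *v x) < 0"
proof -
  from assms obtain r where sym: "transpose B = B"
    and r: "is_eigenvalue B r" "dim (eigsp B r) = 1"
    and neg: "\<And>\<mu>. is_eigenvalue B \<mu> \<Longrightarrow> \<mu> \<noteq> r \<Longrightarrow> \<mu> < 0"
    unfolding antiferromagnetic_def sym_matrix_def by blast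
  from r(1) obtain v where v: "v \<noteq> 0" "B *v v = r *\<^sub>R v" unfolding is_eigenvalue_def by blast
  have "x \<bullet> (B *v x) < 0" if x: "x \<bullet> v = 0" "x \<noteq> 0" for x
  proof -
    obtain x0 m where x0: "x0 \<noteq> 0" "x0 \<bullet> v = 0" "B *v x0 = m *\<^sub>R x0"
      and bound: "\<And>z. z \<bullet> v = 0 \<Longrightarrow> z \<bullet> (B *v z) \<le> m * (z \<bullet> z)"
      using rayleigh_max_on_orthogonal_complement[OF sym v(2) x] by blast
    have "m \<noteq> r"
    proof
      assume "m = r"
      then have "x0 \<in> span {v}"
        using x0 eigsp_eq_span_if_dim_one[OF r(2) v] by (auto simp: eigsp_def)
      then obtain k where "x0 = k *\<^sub>R v" by (auto simp: span_singleton)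
      then show False using x0 v by simp
    qed
    then have "m < 0" using neg x0 unfolding is_eigenvalue_def by blast
    moreover have "x \<bullet> x > 0" using x by simp
    ultimately show ?thesis using bound[OF x(1)] by (smt (verit) mult_neg_pos)
  qed
  then show ?thesis using that by blast
qed

lemma quadratic_form_nonneg:
  fixes B :: "real^'n^'n"
  assumes "nonneg_matrix B" "\<forall>i. z$i \<ge> 0"
  shows "z \<bullet> (B *v z) \<ge> 0"
  using assms unfolding nonneg_matrix_def inner_vec_def matrix_vector_mult_def
  by (auto intro!: sum_nonneg mult_nonneg_nonneg)

lemma scaleR_eq_scaleR_of_sum_one:
  fixes z1 z2 :: "real^'n"
  assumes "sum (\<lambda>i. z1$i) UNIV = 1" "sum (\<lambda>i. z2$i) UNIV = 1"
    and "b *\<^sub>R z1 = a *\<^sub>R z2" "z1 \<noteq> z2"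
  shows "a = 0"
proof -
  have "b * sum (\<lambda>i. z1$i) UNIV = a * sum (\<lambda>i. z2$i) UNIV"
    using arg_cong[OF assms(3), of "\<lambda>z. sum (\<lambda>i. z$i) UNIV"] by (simp add: sum_distrib_left)
  then have "b = a" using assms(1,2) by simp
  then show ?thesis using assms(3,4) by auto
qed

lemma binary_form_negative_imp_discriminant_pos:
  fixes a b c s t :: real
  assumes a: "a \<ge> 0" and b: "b \<ge> 0" and neg: "s\<^sup>2 * a - 2 * s * t * c + t\<^sup>2 * b < 0"
  shows "a * b < c\<^sup>2"
proof (rule ccontr)
  assume "\<not> a * b < c\<^sup>2"
  then have disc: "a * b - c\<^sup>2 \<ge> 0" by simp
  show False
  proof (cases "a = 0")
    case True
    then have "c = 0" using disc by simp
    moreover have "t\<^sup>2 * b \<ge> 0" using b by simp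
    ultimately show False using neg True by simp
  next
    case False
    have "a * (s\<^sup>2 * a - 2 * s * t * c + t\<^sup>2 * b) = (a * s - c * t)\<^sup>2 + (a * b - c\<^sup>2) * t\<^sup>2"
      by (simp add: power2_eq_square algebra_simps)
    also have "\<dots> \<ge> 0" using disc by simp
    finally have "a * (s\<^sup>2 * a - 2 * s * t * c + t\<^sup>2 * b) \<ge> 0" .
    moreover have "a * (s\<^sup>2 * a - 2 * s * t * c + t\<^sup>2 * b) < 0"
      using False a neg by (simp add: mult_pos_neg)
    ultimately show False by linarith
  qed
qed

theorem lemma17:
  fixes B :: "real^'q^'q" and z1 z2 :: "real^'q"
  assumes "antiferromagnetic B"
    and "\<forall>i. z1$i \<ge> 0" and "\<forall>i. z2$i \<ge> 0"
    and "(\<Sum>i\<in>UNIV. \<bar>z1$i\<bar>) = 1" and "(\<Sum>i\<in>UNIV. \<bar>z2$i\<bar>) = 1"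
  shows "(z1 \<bullet> (B *v z1)) * (z2 \<bullet> (B *v z2)) \<le> (z1 \<bullet> (B *v z2))^2
         \<and> ((z1 \<bullet> (B *v z1)) * (z2 \<bullet> (B *v z2)) = (z1 \<bullet> (B *v z2))^2 \<longleftrightarrow> z1 = z2)"
proof (cases "z1 = z2")
  case False
  have sym: "transpose B = B" and nn: "nonneg_matrix B"
    using assms(1) unfolding antiferromagnetic_def sym_matrix_def by auto
  obtain v where neg: "\<And>x. x \<bullet> v = 0 \<Longrightarrow> x \<noteq> 0 \<Longrightarrow> x \<bullet> (B *v x) < 0"
    using antiferromagnetic_negative_on_orthogonal_complement[OF assms(1)] by blast
  have sums: "sum (\<lambda>i. z1$i) UNIV = 1" "sum (\<lambda>i. z2$i) UNIV = 1" using assms(2-5) by simp_all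
  have nonneg: "z1 \<bullet> (B *v z1) \<ge> 0" "z2 \<bullet> (B *v z2) \<ge> 0"
    using quadratic_form_nonneg[OF nn] assms(2,3) by blast+
  define w where "w = (z2 \<bullet> v) *\<^sub>R z1 - (z1 \<bullet> v) *\<^sub>R z2"
  have "w \<bullet> v = 0" by (simp add: w_def inner_diff_left)
  moreover have "w \<noteq> 0"
  proof
    assume "w = 0"
    then have "z1 \<bullet> v = 0" using scaleR_eq_scaleR_of_sum_one[OF sums _ False] by (simp add: w_def)
    moreover have "z1 \<noteq> 0" using sums by auto
    ultimately show False using neg[of z1] nonneg by simp
  qed
  ultimately have "w \<bullet> (B *v w) < 0" by (rule neg)
  then have "(z1 \<bullet> (B *v z1)) * (z2 \<bullet> (B *v z2)) < (z1 \<bullet> (B *v z2))\<^sup>2"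
    unfolding w_def quadratic_form_diff_scaleR[OF sym]
    by (rule binary_form_negative_imp_discriminant_pos[OF nonneg])
  then show ?thesis using False by simp
qed (simp add: power2_eq_square)

end
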